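(* Let $k\geq 1$ be fixed and $p\neq 0$ real. The inequality $$\frac{2}{k+2}\left( \frac{\sin x}{x}\right) ^{kp}+\frac{k}{k+2}\left( \frac{\tan x}{x}\right) ^{p}<1$$ holds for all $x\in (0,\pi/2)$ if and only if $-\dfrac{12}{5(k+2)}\leq p<0$. *)

theory Defs
  imports "HOL-Analysis.Analysis"
begin

end

theory Submission
  imports Defs "HOL-Real_Asymp.Real_Asymp"
begin

text \<open>
  For \<open>-q \<le> p < 0\<close>, with \<open>q = 12 / (5 (k + 2))\<close>, concavity of \<open>X \<mapsto> X\<^sup>r\<close> reduces the
  claim to the critical exponent \<open>p = -q\<close>. There, with \<open>Y = (sin x / x)\<^sup>4\<^sup>/\<^sup>5\<close> and
  \<open>m = (cos x)\<^sup>4\<^sup>/\<^sup>5\<close>, the left-hand side is a function of \<open>Y\<close> and \<open>m\<close> decreasing in \<open>Y\<close>;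
  the power-mean type inequality \<open>Y > (2 + m) / 3\<close> bounds it by a one-variable
  function that is at most 1 by calculus. That inequality holds because
  \<open>3 Y - 2 - m\<close> vanishes at \<open>0\<close> and increases, which in turn comes down to
  \<open>cos x (3 (sin x / x - cos x) / x\<^sup>2)\<^sup>5 < (sin x / x)\<^sup>6\<close>: this is proved from Taylor
  bounds and a polynomial positivity certificate checked by evaluation.

  Conversely, for \<open>p > 0\<close> the tangent term is unbounded near \<open>\<pi>/2\<close>, and for \<open>p < -q\<close>
  the left-hand side is \<open>1 + c x\<^sup>4 + O(x\<^sup>6)\<close> with \<open>c > 0\<close> as \<open>x \<rightarrow> 0\<close>: the \<open>x\<^sup>2\<close> terms
  cancel, and the \<open>x\<^sup>4\<close> coefficient is positive exactly below the critical exponent.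
\<close>

section \<open>Certified positivity of integer polynomials\<close>

fun ipoly :: "int list \<Rightarrow> real \<Rightarrow> real" where
  "ipoly [] x = 0"
| "ipoly (c # cs) x = of_int c + x * ipoly cs x"

fun ipoly_add :: "int list \<Rightarrow> int list \<Rightarrow> int list" where
  "ipoly_add [] ds = ds"
| "ipoly_add cs [] = cs"
| "ipoly_add (c # cs) (d # ds) = (c + d) # ipoly_add cs ds"

fun ipoly_smult :: "int \<Rightarrow> int list \<Rightarrow> int list" where
  "ipoly_smult a [] = []"
| "ipoly_smult a (c # cs) = (a * c) # ipoly_smult a cs"

fun ipoly_mult :: "int list \<Rightarrow> int list \<Rightarrow> int list" where
  "ipoly_mult [] ds = []"
| "ipoly_mult (c # cs) ds = ipoly_add (ipoly_smult c ds) (0 # ipoly_mult cs ds)"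

fun ipoly_power :: "int list \<Rightarrow> nat \<Rightarrow> int list" where
  "ipoly_power cs 0 = [1]"
| "ipoly_power cs (Suc n) = ipoly_mult cs (ipoly_power cs n)"

lemma ipoly_add [simp]: "ipoly (ipoly_add cs ds) x = ipoly cs x + ipoly ds x"
  by (induction cs ds rule: ipoly_add.induct) (auto simp: algebra_simps)

lemma ipoly_smult [simp]: "ipoly (ipoly_smult a cs) x = of_int a * ipoly cs x"
  by (induction cs) (auto simp: algebra_simps)

lemma ipoly_mult [simp]: "ipoly (ipoly_mult cs ds) x = ipoly cs x * ipoly ds x"
  by (induction cs) (auto simp: algebra_simps)

lemma ipoly_power [simp]: "ipoly (ipoly_power cs n) x = ipoly cs x ^ n"
  by (induction n) auto

text \<open>The lower bounds are computed by \<open>simp\<close>; keeping the Horner step a separate constant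
  makes it evaluate the recursive call once rather than once per branch of the \<open>if\<close>.\<close>

definition horner_lower_step :: "int \<Rightarrow> nat \<Rightarrow> nat \<Rightarrow> int \<Rightarrow> int" where
  "horner_lower_step c a b l = c + (if 0 \<le> l then int a * l else int b * l)"

fun horner_lower :: "int list \<Rightarrow> nat \<Rightarrow> nat \<Rightarrow> int" where
  "horner_lower [] a b = 0"
| "horner_lower (c # cs) a b = horner_lower_step c a b (horner_lower cs a b)"

lemma horner_lower_le:
  assumes "real a \<le> u" and "u \<le> real b"
  shows "of_int (horner_lower cs a b) \<le> ipoly cs u"
proof (induction cs)
  case Nil
  then show ?case by simp
next
  case (Cons c cs)
  define l where "l = horner_lower cs a b"
  have u0: "0 \<le> u" using assms(1) by linarith
  have "of_int (if 0 \<le> l then int a * l else int b * l) \<le> u * of_int l"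
    using assms by (auto intro: mult_right_mono mult_right_mono_neg)
  also have "\<dots> \<le> u * ipoly cs u"
    using Cons.IH u0 by (auto simp: l_def intro: mult_left_mono)
  finally show ?case by (simp add: horner_lower_step_def flip: l_def)
qed

fun positive_on_partition :: "int list \<Rightarrow> nat list \<Rightarrow> bool" where
  "positive_on_partition cs (a # b # ps) =
     (0 < horner_lower cs a b \<and> positive_on_partition cs (b # ps))"
| "positive_on_partition cs _ = True"

lemma positive_on_partition_imp_pos:
  assumes "positive_on_partition cs (a # ps)" and "ps \<noteq> []"
    and "real a \<le> u" and "u \<le> real (last ps)"
  shows "0 < ipoly cs u"
  using assms
proof (induction ps arbitrary: a)
  case Nil
  then show ?case by simp
next
  case (Cons b ps)
  show ?case
  proof (cases "u \<le> real b")
    case True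
    then show ?thesis
      using Cons.prems horner_lower_le[of a u b cs] by force
  next
    case False
    then show ?thesis
      using Cons.prems by (intro Cons.IH[of b]) (auto split: if_splits)
  qed
qed

text \<open>Substituting \<open>u = N t\<close> turns rational breakpoints \<open>a / N\<close> into integers.\<close>

fun ipoly_rescale :: "int list \<Rightarrow> nat \<Rightarrow> int list" where
  "ipoly_rescale [] N = []"
| "ipoly_rescale (c # cs) N = (c * int N ^ length cs) # ipoly_rescale cs N"

lemma ipoly_rescale:
  assumes "0 < N"
  shows "ipoly (ipoly_rescale cs N) u = real N ^ (length cs - 1) * ipoly cs (u / real N)"
proof (induction cs)
  case Nil
  then show ?case by simp
next
  case (Cons c cs)
  with assms show ?case
    by (cases cs) (auto simp: algebra_simps)
qed

lemma ipoly_pos_by_partition: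
  assumes "positive_on_partition (ipoly_rescale cs N) (a # ps)" and "ps \<noteq> []" and "0 < N"
    and "real a \<le> real N * t" and "real N * t \<le> real (last ps)"
  shows "0 < ipoly cs t"
proof -
  have "0 < ipoly (ipoly_rescale cs N) (real N * t)"
    using positive_on_partition_imp_pos assms(1,2,4,5) .
  with assms(3) show ?thesis
    by (simp add: ipoly_rescale zero_less_mult_iff)
qed

section \<open>Taylor bounds for \<open>sin x / x\<close> and \<open>cos x\<close>\<close>

lemma Maclaurin_cos_bound:
  fixes x :: real
  shows "\<bar>cos x - (\<Sum>m<n. cos_coeff m * x ^ m)\<bar> \<le> inverse (fact n) * \<bar>x\<bar> ^ n"
proof -
  obtain t where "cos x = (\<Sum>m<n. cos_coeff m * x ^ m) + cos (t + 1/2 * real n * pi) / fact n * x ^ n"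
    using Maclaurin_cos_expansion by blast
  then have "\<bar>cos x - (\<Sum>m<n. cos_coeff m * x ^ m)\<bar> = \<bar>cos (t + 1/2 * real n * pi)\<bar> / fact n * \<bar>x\<bar> ^ n"
    by (simp add: abs_mult power_abs)
  also have "\<dots> \<le> 1 / fact n * \<bar>x\<bar> ^ n"
    by (intro mult_right_mono divide_right_mono) auto
  finally show ?thesis
    by (simp add: divide_inverse)
qed

lemma sinc_Maclaurin_bound:
  fixes x :: real
  assumes "x \<noteq> 0"
  shows "\<bar>sin x / x - (1 - x\<^sup>2/6 + (x\<^sup>2)\<^sup>2/120 - (x\<^sup>2)^3/5040)\<bar> \<le> (x\<^sup>2)^4/362880"
proof -
  have "{..<9::nat} = {0,1,2,3,4,5,6,7,8}"
    by (simp add: lessThan_nat_numeral lessThan_Suc insert_commute)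
  then have "(\<Sum>m<9. sin_coeff m * x ^ m) = x - x^3/6 + x^5/120 - x^7/5040"
    by (simp add: sin_coeff_def fact_numeral)
  also have "\<dots> = x * (1 - x\<^sup>2/6 + (x\<^sup>2)\<^sup>2/120 - (x\<^sup>2)^3/5040)"
    by (simp add: field_simps eval_nat_numeral)
  finally have sum: "(\<Sum>m<9. sin_coeff m * x ^ m) = x * (1 - x\<^sup>2/6 + (x\<^sup>2)\<^sup>2/120 - (x\<^sup>2)^3/5040)" .
  have "\<bar>x\<bar> ^ 9 = \<bar>x\<bar> * \<bar>x\<bar> ^ 8"
    by (simp add: numeral_eq_Suc)
  then have rest: "inverse (fact 9) * \<bar>x\<bar> ^ 9 = \<bar>x\<bar> * ((x\<^sup>2)^4/362880)"
    by (simp add: fact_numeral flip: power_mult)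
  have "\<bar>x\<bar> * \<bar>sin x / x - (1 - x\<^sup>2/6 + (x\<^sup>2)\<^sup>2/120 - (x\<^sup>2)^3/5040)\<bar>
      = \<bar>sin x - x * (1 - x\<^sup>2/6 + (x\<^sup>2)\<^sup>2/120 - (x\<^sup>2)^3/5040)\<bar>"
    using assms by (simp add: right_diff_distrib flip: abs_mult)
  also have "\<dots> \<le> \<bar>x\<bar> * ((x\<^sup>2)^4/362880)"
    using Maclaurin_sin_bound[of x 9] unfolding sum rest .
  finally show ?thesis
    using assms by simp
qed

lemma cos_Maclaurin_bound:
  fixes x :: real
  shows "\<bar>cos x - (1 - x\<^sup>2/2 + (x\<^sup>2)\<^sup>2/24 - (x\<^sup>2)^3/720 + (x\<^sup>2)^4/40320)\<bar> \<le> (x\<^sup>2)^5/3628800"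
proof -
  have "{..<10::nat} = {0,1,2,3,4,5,6,7,8,9}"
    by (simp add: lessThan_nat_numeral lessThan_Suc insert_commute)
  then have "(\<Sum>m<10. cos_coeff m * x ^ m) = 1 - x\<^sup>2/2 + (x\<^sup>2)\<^sup>2/24 - (x\<^sup>2)^3/720 + (x\<^sup>2)^4/40320"
    by (simp add: cos_coeff_def fact_numeral flip: power_mult)
  moreover have "inverse (fact 10) * \<bar>x\<bar> ^ 10 = (x\<^sup>2)^5/3628800"
    by (simp add: fact_numeral flip: power_mult)
  ultimately show ?thesis
    using Maclaurin_cos_bound[of x 10] by (simp only:)
qed

lemma x_cos_less_sin:
  fixes x :: real
  assumes "0 < x" and "x \<le> pi"
  shows "x * cos x < sin x"
proof -
  have "\<exists>d. ((\<lambda>u. sin u - u * cos u) has_real_derivative d) (at u) \<and> 0 < d"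
    if "0 < u" and "u < x" for u
  proof -
    have "((\<lambda>u. sin u - u * cos u) has_real_derivative u * sin u) (at u)"
      by (auto intro!: derivative_eq_intros)
    moreover have "0 < u * sin u"
      using that assms by (simp add: sin_gt_zero)
    ultimately show ?thesis by blast
  qed
  then have "sin 0 - 0 * cos 0 < sin x - x * cos x"
    using assms(1) by (intro DERIV_pos_imp_increasing_open[of 0 x "\<lambda>u. sin u - u * cos u"])
      (auto intro!: continuous_intros)
  then show ?thesis by simp
qed

lemma power2_less_five_halves:
  fixes x :: real
  assumes "0 < x" and "x < pi / 2"
  shows "x\<^sup>2 < 5 / 2"
proof -
  have "pi / 2 < (1571 / 1000 :: real)"
    using pi_approx by simp
  then have "x < 1571 / 1000"
    using assms(2) by linarith
  then have "x\<^sup>2 < (1571 / 1000)\<^sup>2"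
    using assms(1) by (intro power_strict_mono) auto
  then show ?thesis
    by (simp add: power2_eq_square)
qed

section \<open>The inequality \<open>(sin x / x)\<^sup>4\<^sup>/\<^sup>5 > (2 + (cos x)\<^sup>4\<^sup>/\<^sup>5) / 3\<close>\<close>

text \<open>With \<open>t = x\<^sup>2\<close>, the Taylor bounds give \<open>sin x / x \<ge> ipoly sinc_lower_poly t / 362880\<close>,
  \<open>cos x \<le> ipoly cos_upper_poly t / 3628800\<close> and
  \<open>(sin x / x - cos x) / t \<le> ipoly sinc_cos_gap_upper_poly t / 3628800\<close>.\<close>

definition sinc_lower_poly :: "int list" where
  "sinc_lower_poly = [362880, -60480, 3024, -72, -1]"

definition cos_upper_poly :: "int list" where
  "cos_upper_poly = [3628800, -1814400, 151200, -5040, 90, 1]"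

definition sinc_cos_gap_upper_poly :: "int list" where
  "sinc_cos_gap_upper_poly = [1209600, -120960, 4320, -80, 1]"

definition key_gap_poly :: "int list" where
  "key_gap_poly = [130478858490956046616284364800000000000, -84086375471949452263827701760000000000,
    25752045770131163487821365248000000000, -4977516396536338477714935644160000000,
    679005281922867398520267079680000000, -69118491591274013001819095040000000,
    5398974941547835594855415808000000, -326444947790742489334284288000000,
    15108102068904045782551756800000, -511519280850285140901888000000,
    10917069224582545145856000000, -38165925587254404710400000, -6805140970728023654400000,
    257783552695487692800000, -4070028436244766720000, 314784493608960000, 885725297418240000,
    -1336875798528000, -290629923782400, 1347171523200, 60288040800, 421171920, 1075330, -243]"

lemma key_gap_poly_identity:
  "ipoly_add (ipoly_smult 1000000 (ipoly_power sinc_lower_poly 6))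
     (ipoly_smult (-243) (ipoly_mult cos_upper_poly (ipoly_power sinc_cos_gap_upper_poly 5)))
   = 0 # 0 # key_gap_poly"
  by (simp add: sinc_lower_poly_def cos_upper_poly_def sinc_cos_gap_upper_poly_def key_gap_poly_def
      numeral_eq_Suc)

lemma key_gap_poly_pos: "0 \<le> t \<Longrightarrow> t \<le> 5/2 \<Longrightarrow> 0 < ipoly key_gap_poly t"
  by (rule ipoly_pos_by_partition[of _ 10 0 "[12, 18, 21, 25]"])
    (simp_all add: key_gap_poly_def horner_lower_step_def)

lemma sinc_lower_poly_pos: "0 \<le> t \<Longrightarrow> t \<le> 5/2 \<Longrightarrow> 0 < ipoly sinc_lower_poly t"
  by (rule ipoly_pos_by_partition[of _ 10 0 "[25]"])
    (simp_all add: sinc_lower_poly_def horner_lower_step_def)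

lemma key_polynomial_inequality:
  fixes s c r t :: real
  assumes t: "0 < t" "t \<le> 5/2"
    and s: "ipoly sinc_lower_poly t / 362880 \<le> s"
    and c: "0 < c" "c \<le> ipoly cos_upper_poly t / 3628800"
    and r: "0 < r" "r \<le> ipoly sinc_cos_gap_upper_poly t / 3628800"
  shows "c * (3 * r)^5 < s^6"
proof -
  let ?S = "ipoly sinc_lower_poly t" and ?C = "ipoly cos_upper_poly t"
    and ?R = "ipoly sinc_cos_gap_upper_poly t"
  have "1000000 * ?S^6 - 243 * (?C * ?R^5) = t * (t * ipoly key_gap_poly t)"
    using arg_cong[OF key_gap_poly_identity, of "\<lambda>cs. ipoly cs t"] by simp
  moreover have "0 < t * (t * ipoly key_gap_poly t)"
    using key_gap_poly_pos t by simp
  ultimately have "(?C / 3628800) * (3 * (?R / 3628800))^5 < (?S / 362880)^6"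
    by (simp add: power_divide field_simps)
  moreover have "c * (3 * r)^5 \<le> (?C / 3628800) * (3 * (?R / 3628800))^5"
    using c r by (intro mult_mono power_mono) auto
  moreover have "(?S / 362880)^6 \<le> s^6"
    using s sinc_lower_poly_pos[of t] t by (intro power_mono) auto
  ultimately show ?thesis by linarith
qed

lemma cos_mult_pow5_less_sinc_pow6:
  fixes x :: real
  assumes "0 < x" and "x < pi / 2"
  shows "cos x * (3 * ((sin x / x - cos x) / x\<^sup>2))^5 < (sin x / x)^6"
proof -
  define t where "t = x\<^sup>2"
  define s where "s = sin x / x"
  have t: "0 < t" "t \<le> 5/2"
    using assms(1) power2_less_five_halves[OF assms] by (auto simp: t_def)
  have sinc: "\<bar>s - (1 - t/6 + t\<^sup>2/120 - t^3/5040)\<bar> \<le> t^4/362880"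
    using sinc_Maclaurin_bound[of x] assms(1) by (simp add: t_def s_def)
  have cos: "\<bar>cos x - (1 - t/2 + t\<^sup>2/24 - t^3/720 + t^4/40320)\<bar> \<le> t^5/3628800"
    using cos_Maclaurin_bound[of x] by (simp add: t_def)
  have s_lower: "ipoly sinc_lower_poly t / 362880 \<le> s"
    using sinc unfolding abs_le_iff by (simp add: sinc_lower_poly_def field_simps eval_nat_numeral)
  have cos_upper: "cos x \<le> ipoly cos_upper_poly t / 3628800"
    using cos unfolding abs_le_iff by (simp add: cos_upper_poly_def field_simps eval_nat_numeral)
  have "s - cos x \<le> t * (ipoly sinc_cos_gap_upper_poly t / 3628800)"
    using sinc cos unfolding abs_le_iff
    by (simp add: sinc_cos_gap_upper_poly_def field_simps eval_nat_numeral)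
  then have gap_upper: "(s - cos x) / t \<le> ipoly sinc_cos_gap_upper_poly t / 3628800"
    using t by (simp add: divide_le_eq mult.commute)
  have gap_pos: "0 < (s - cos x) / t"
    using x_cos_less_sin[of x] assms t by (simp add: s_def field_simps)
  have cos_pos: "0 < cos x"
    using assms by (intro cos_gt_zero) auto
  from key_polynomial_inequality[OF t s_lower cos_pos cos_upper gap_pos gap_upper]
  show ?thesis by (simp add: t_def s_def)
qed

lemma powr_one_fifth_pow5:
  fixes a :: real
  assumes "0 < a"
  shows "(a^5) powr (1/5) = a"
proof -
  have "a^5 = a powr 5"
    using powr_realpow[OF assms, of 5] by simp
  then show ?thesis
    using assms by (simp only: powr_powr) simp
qed

lemma fifth_root_comparison:
  fixes s c r :: real
  assumes "0 < s" and "0 < c" and "0 < r" and "c * r^5 < s^6"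
  shows "r / s powr (1/5) < s / c powr (1/5)"
proof -
  have "c powr (1/5) * r = (c * r^5) powr (1/5)"
    using assms by (subst powr_mult) (simp_all add: powr_one_fifth_pow5)
  also have "\<dots> < (s^5 * s) powr (1/5)"
    using assms by (intro powr_less_mono2) (simp_all add: power_Suc2 [symmetric])
  also have "\<dots> = s * s powr (1/5)"
    using assms by (subst powr_mult) (simp_all add: powr_one_fifth_pow5)
  finally show ?thesis
    using assms by (simp add: field_simps)
qed

lemma sinc_power_mean_gap_deriv_pos:
  fixes x :: real
  assumes "0 < x" and "x < pi / 2"
  shows "\<exists>D. ((\<lambda>u. 3 * (sin u / u) powr (4/5) - 2 - cos u powr (4/5)) has_real_derivative D) (at x)
           \<and> 0 < D"
proof -
  define s where "s = sin x / x"
  define c where "c = cos x"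
  define r where "r = (s - c) / x\<^sup>2"
  have s: "0 < s"
    using assms by (simp add: s_def sin_gt_zero)
  have c: "0 < c"
    using assms by (simp add: c_def cos_gt_zero)
  have r: "0 < r"
    using x_cos_less_sin[of x] assms by (simp add: r_def s_def c_def field_simps)
  have deriv: "((\<lambda>u. 3 * (sin u / u) powr (4/5) - 2 - cos u powr (4/5)) has_real_derivative
          3 * (4/5 * s powr (4/5 - 1) * ((cos x * x - sin x) / x\<^sup>2)) - 4/5 * c powr (4/5 - 1) * - sin x)
          (at x)" (is "(?g has_real_derivative ?E) _")
    using assms s c unfolding s_def c_def by (auto intro!: derivative_eq_intros simp: power2_eq_square)
  have eq: "?E = 4/5 * x * (s / c powr (1/5) - 3 * r / s powr (1/5))"
  proof -
    have "sin x = x * s" and "cos x = c"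
      using assms(1) by (simp_all add: s_def c_def)
    then show ?thesis
      using assms(1) s c by (simp add: r_def powr_minus_divide field_simps power2_eq_square)
  qed
  have "c * (3 * r)^5 < s^6"
    using cos_mult_pow5_less_sinc_pow6[OF assms] by (simp only: s_def c_def r_def)
  then have "0 < 4/5 * x * (s / c powr (1/5) - 3 * r / s powr (1/5))"
    using fifth_root_comparison[of s c "3 * r"] s c r assms(1) by simp
  with deriv show ?thesis
    unfolding eq by blast
qed

lemma power_mean_cos_less_sinc:
  fixes x :: real
  assumes "0 < x" and "x < pi / 2"
  shows "(2 + cos x powr (4/5)) / 3 < (sin x / x) powr (4/5)"
proof -
  define g where "g = (\<lambda>u::real. 3 * (sin u / u) powr (4/5) - 2 - cos u powr (4/5))"
  have mono: "g a < g b" if "0 < a" and "a < b" and "b < pi / 2" for a b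
  proof (rule DERIV_pos_imp_increasing[OF that(2)])
    fix u
    assume "a \<le> u" and "u \<le> b"
    then show "\<exists>D. (g has_real_derivative D) (at u) \<and> 0 < D"
      unfolding g_def using that by (intro sinc_power_mean_gap_deriv_pos) auto
  qed
  have "(g \<longlongrightarrow> 0) (at_right 0)"
    unfolding g_def by real_asymp
  moreover have "\<forall>\<^sub>F u in at_right 0. g u \<le> g (x / 2)"
    unfolding eventually_at_right_field
  proof (intro exI[of _ "x / 2"] conjI allI impI)
    fix u :: real
    assume "0 < u" and "u < x / 2"
    then show "g u \<le> g (x / 2)"
      using assms by (intro less_imp_le mono) auto
  qed (use assms in auto)
  ultimately have "0 \<le> g (x / 2)"
    by (rule tendsto_upperbound) simp
  also have "g (x / 2) < g x"
    using assms by (intro mono) auto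
  finally show ?thesis
    by (simp add: g_def)
qed

section \<open>Sufficiency\<close>

lemma powr_two_minus_le_powr:
  fixes u \<sigma> :: real
  assumes "1 \<le> u" and "u < 3/2" and "\<sigma> \<le> 1"
  shows "u powr (2 - 2 * \<sigma>) \<le> (3 - 2 * u) powr (\<sigma> - 1)"
proof -
  have "u\<^sup>2 * (3 - 2 * u) \<le> 1"
  proof -
    have "1 - u\<^sup>2 * (3 - 2 * u) = (u - 1)\<^sup>2 * (2 * u + 1)"
      by (simp add: algebra_simps power2_eq_square)
    moreover have "0 \<le> (u - 1)\<^sup>2 * (2 * u + 1)"
      using assms by simp
    ultimately show ?thesis by linarith
  qed
  then have "u\<^sup>2 \<le> 1 / (3 - 2 * u)"
    using assms by (simp add: field_simps)
  have "u powr (2 - 2 * \<sigma>) = (u powr 2) powr (1 - \<sigma>)"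
    by (simp add: powr_powr algebra_simps)
  also have "\<dots> = (u\<^sup>2) powr (1 - \<sigma>)"
    using assms by simp
  also have "\<dots> \<le> (1 / (3 - 2 * u)) powr (1 - \<sigma>)"
    using \<open>u\<^sup>2 \<le> 1 / (3 - 2 * u)\<close> assms by (intro powr_mono2) auto
  also have "\<dots> = (3 - 2 * u) powr (\<sigma> - 1)"
    using assms by (simp add: powr_divide powr_minus_divide [symmetric])
  finally show ?thesis .
qed

lemma weighted_powr_sum_le_one:
  fixes B \<sigma> :: real
  assumes "1 \<le> B" and "B < 3/2" and "0 < \<sigma>" and "\<sigma> \<le> 1"
  shows "2 * \<sigma> / 3 * B powr (3 - 2 * \<sigma>) + (1 - 2 * \<sigma> / 3) * (3 - 2 * B) powr \<sigma> \<le> 1"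
proof -
  define g where "g = (\<lambda>u. 2 * \<sigma> / 3 * u powr (3 - 2 * \<sigma>) + (1 - 2 * \<sigma> / 3) * (3 - 2 * u) powr \<sigma>)"
  have "g B \<le> g 1"
  proof (rule DERIV_nonpos_imp_nonincreasing[OF assms(1)])
    fix u :: real
    assume u: "1 \<le> u" "u \<le> B"
    have deriv: "(g has_real_derivative
            2 * \<sigma> / 3 * ((3 - 2 * \<sigma>) * u powr (3 - 2 * \<sigma> - 1))
            + (1 - 2 * \<sigma> / 3) * (\<sigma> * (3 - 2 * u) powr (\<sigma> - 1) * - 2)) (at u)"
      unfolding g_def using u assms by (auto intro!: derivative_eq_intros)
    have eq: "2 * \<sigma> / 3 * ((3 - 2 * \<sigma>) * u powr (3 - 2 * \<sigma> - 1))
            + (1 - 2 * \<sigma> / 3) * (\<sigma> * (3 - 2 * u) powr (\<sigma> - 1) * - 2)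
        = 2 * \<sigma> / 3 * (3 - 2 * \<sigma>) * (u powr (2 - 2 * \<sigma>) - (3 - 2 * u) powr (\<sigma> - 1))"
      by (simp add: algebra_simps; simp add: field_simps)
    have "2 * \<sigma> / 3 * (3 - 2 * \<sigma>) * (u powr (2 - 2 * \<sigma>) - (3 - 2 * u) powr (\<sigma> - 1)) \<le> 0"
      using powr_two_minus_le_powr[of u \<sigma>] u assms by (intro mult_nonneg_nonpos) auto
    with deriv show "\<exists>D. (g has_real_derivative D) (at u) \<and> D \<le> 0"
      unfolding eq by blast
  qed
  then show ?thesis
    by (simp add: g_def)
qed

lemma critical_mean_bound:
  fixes \<sigma> m Y :: real
  assumes "0 < \<sigma>" and "\<sigma> \<le> 1" and "0 < m" and "m \<le> 1" and "(2 + m) / 3 < Y"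
  shows "2 * \<sigma> / 3 * Y powr - (3 - 2 * \<sigma>) + (1 - 2 * \<sigma> / 3) * (Y powr - \<sigma> * m powr \<sigma>) < 1"
proof -
  define B where "B = 3 / (2 + m)"
  have B: "1 \<le> B" "B < 3/2"
    using assms(3,4) by (auto simp: B_def field_simps)
  have "Y powr - (3 - 2 * \<sigma>) < ((2 + m) / 3) powr - (3 - 2 * \<sigma>)"
    using assms by (intro powr_less_mono2_neg) auto
  also have "\<dots> = B powr (3 - 2 * \<sigma>)"
    by (simp only: powr_minus inverse_powr [symmetric]) (simp add: B_def)
  finally have first: "Y powr - (3 - 2 * \<sigma>) < B powr (3 - 2 * \<sigma>)" .
  have "Y powr - \<sigma> * m powr \<sigma> < ((2 + m) / 3) powr - \<sigma> * m powr \<sigma>"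
    using assms by (intro mult_strict_right_mono powr_less_mono2_neg) auto
  also have "\<dots> = B powr \<sigma> * m powr \<sigma>"
    by (simp only: powr_minus inverse_powr [symmetric]) (simp add: B_def)
  also have "\<dots> = (m * B) powr \<sigma>"
    using assms(3) B by (simp add: powr_mult)
  also have "m * B = 3 - 2 * B"
    using assms(3) by (simp add: B_def field_simps)
  finally have second: "Y powr - \<sigma> * m powr \<sigma> < (3 - 2 * B) powr \<sigma>" .
  have "2 * \<sigma> / 3 * Y powr - (3 - 2 * \<sigma>) + (1 - 2 * \<sigma> / 3) * (Y powr - \<sigma> * m powr \<sigma>)
      < 2 * \<sigma> / 3 * B powr (3 - 2 * \<sigma>) + (1 - 2 * \<sigma> / 3) * (3 - 2 * B) powr \<sigma>"
    using assms(1,2) first second by (intro add_strict_mono mult_strict_left_mono) auto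
  also have "\<dots> \<le> 1"
    using B assms(1,2) by (rule weighted_powr_sum_le_one)
  finally show ?thesis .
qed

lemma ineq_at_critical_exponent:
  fixes k x :: real
  defines "q \<equiv> 12 / (5 * (k + 2))"
  assumes "1 \<le> k" and "0 < x" and "x < pi / 2"
  shows "2 / (k + 2) * (sin x / x) powr (k * - q) + k / (k + 2) * (tan x / x) powr - q < 1"
proof -
  define \<sigma> where "\<sigma> = 3 / (k + 2)"
  define S where "S = sin x / x"
  define Y where "Y = S powr (4/5)"
  define m where "m = cos x powr (4/5)"
  have s: "0 < S"
    using assms by (simp add: S_def sin_gt_zero)
  have c: "0 < cos x" "cos x \<le> 1"
    using assms by (simp_all add: cos_gt_zero)
  have \<sigma>: "0 < \<sigma>" "\<sigma> \<le> 1"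
    using assms(2) by (auto simp: \<sigma>_def field_simps)
  have m: "0 < m" "m \<le> 1"
    using c by (auto simp: m_def powr_le1)
  have "(2 + m) / 3 < Y"
    using power_mean_cos_less_sinc[OF assms(3,4)] by (simp add: Y_def S_def m_def)
  then have bound: "2 * \<sigma> / 3 * Y powr - (3 - 2 * \<sigma>) + (1 - 2 * \<sigma> / 3) * (Y powr - \<sigma> * m powr \<sigma>) < 1"
    using critical_mean_bound \<sigma> m by blast
  have first: "(sin x / x) powr (k * - q) = Y powr - (3 - 2 * \<sigma>)"
    using assms(2) by (simp add: Y_def S_def powr_powr q_def \<sigma>_def field_simps)
  have "tan x / x = S / cos x"
    by (simp add: S_def tan_def)
  then have "(tan x / x) powr - q = S powr - q * cos x powr q"
    using s c by (simp add: powr_divide powr_minus_divide)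
  also have "\<dots> = Y powr - \<sigma> * m powr \<sigma>"
    by (simp add: Y_def m_def powr_powr q_def \<sigma>_def)
  finally have second: "(tan x / x) powr - q = Y powr - \<sigma> * m powr \<sigma>" .
  have weights: "2 / (k + 2) = 2 * \<sigma> / 3" "k / (k + 2) = 1 - 2 * \<sigma> / 3"
    using assms(2) by (simp_all add: \<sigma>_def field_simps)
  show ?thesis
    unfolding first second weights using bound .
qed

lemma powr_le_linear:
  fixes X r :: real
  assumes "0 < X" and "0 \<le> r" and "r \<le> 1"
  shows "X powr r \<le> r * X + (1 - r)"
  using Youngs_inequality_0[of r "1 - r" X 1] assms by simp

lemma ineq_holds_above_critical_exponent:
  fixes k p x :: real
  assumes "1 \<le> k" and "- 12 / (5 * (k + 2)) \<le> p" and "p < 0" and "0 < x" and "x < pi / 2"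
  shows "2 / (k + 2) * (sin x / x) powr (k * p) + k / (k + 2) * (tan x / x) powr p < 1"
proof -
  define q where "q = 12 / (5 * (k + 2))"
  define r where "r = - p / q"
  define X1 where "X1 = (sin x / x) powr (k * - q)"
  define X2 where "X2 = (tan x / x) powr - q"
  have q: "0 < q"
    using assms(1) by (simp add: q_def)
  have "- p \<le> q"
    using assms(2) by (simp add: q_def)
  then have r: "0 < r" "r \<le> 1"
    using assms(3) q by (simp_all add: r_def field_simps)
  have X: "0 < X1" "0 < X2"
    using assms(4,5) sin_gt_zero[of x] tan_gt_zero[of x] by (simp_all add: X1_def X2_def)
  have rescale: "(sin x / x) powr (k * p) = X1 powr r" "(tan x / x) powr p = X2 powr r"
    using q by (simp_all add: X1_def X2_def r_def powr_powr)
  have "2 / (k + 2) * (sin x / x) powr (k * p) + k / (k + 2) * (tan x / x) powr p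
      \<le> 2 / (k + 2) * (r * X1 + (1 - r)) + k / (k + 2) * (r * X2 + (1 - r))"
    unfolding rescale using assms(1) X r by (intro add_mono mult_left_mono powr_le_linear) auto
  also have "\<dots> = r * (2 / (k + 2) * X1 + k / (k + 2) * X2) + (1 - r) * (2 / (k + 2) + k / (k + 2))"
    by (simp only: ring_distribs) (simp add: algebra_simps)
  also have "2 / (k + 2) + k / (k + 2) = 1"
    using assms(1) by (simp add: add_divide_distrib [symmetric])
  also have "r * (2 / (k + 2) * X1 + k / (k + 2) * X2) + (1 - r) * 1 < 1"
    using ineq_at_critical_exponent[OF assms(1,4,5)] r by (simp add: X1_def X2_def q_def)
  finally show ?thesis .
qed

section \<open>Necessity\<close>

lemma ineq_fails_for_positive_exponent:
  fixes k p :: real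
  assumes "0 < k" and "0 < p"
  shows "\<exists>x. 0 < x \<and> x < pi / 2 \<and>
           1 \<le> 2 / (k + 2) * (sin x / x) powr (k * p) + k / (k + 2) * (tan x / x) powr p"
proof -
  define M where "M = ((k + 2) / k) powr (1 / p)"
  define x where "x = arctan (2 * M)"
  have M: "0 < M"
    using assms(1) by (simp add: M_def)
  have x: "0 < x" "x < pi / 2"
    using M arctan_ubound[of "2 * M"] by (simp_all add: x_def)
  have "x < 2"
    using x(2) pi_less_4 by linarith
  moreover have "tan x = 2 * M"
    by (simp add: x_def tan_arctan)
  ultimately have "M \<le> tan x / x"
    using x(1) M by (simp add: field_simps)
  then have "M powr p \<le> (tan x / x) powr p"
    using assms(2) M by (intro powr_mono2) auto
  also have "M powr p = (k + 2) / k"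
    using assms by (simp add: M_def powr_powr)
  finally have "1 \<le> k / (k + 2) * (tan x / x) powr p"
    using assms(1) by (simp add: field_simps)
  moreover have "0 \<le> 2 / (k + 2) * (sin x / x) powr (k * p)"
    using assms(1) by simp
  ultimately show ?thesis
    using x by (intro exI[of _ x]) auto
qed

lemma exp_ge_cubic_Taylor:
  fixes u :: real
  shows "1 + u + u\<^sup>2/2 + u^3/6 \<le> exp u"
proof -
  obtain s where s: "exp u = (\<Sum>m<4. u ^ m / fact m) + exp s / fact 4 * u ^ 4"
    using Maclaurin_exp_le[of u 4] by blast
  have "{..<4::nat} = {0,1,2,3}"
    by (simp add: lessThan_nat_numeral lessThan_Suc insert_commute)
  then have "(\<Sum>m<4. u ^ m / fact m) = 1 + u + u\<^sup>2/2 + u^3/6"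
    by (simp add: fact_numeral)
  moreover have "0 \<le> exp s / fact 4 * u ^ 4"
    by simp
  ultimately show ?thesis
    using s by linarith
qed

lemma sinc_cos_bounds_small:
  fixes x :: real
  defines "t \<equiv> x\<^sup>2"
  assumes "0 < x" and "t \<le> 1"
  shows "1 - t/6 \<le> sin x / x" and "sin x / x \<le> 1 - t/6 + t\<^sup>2/120"
    and "1 - t/2 + t\<^sup>2/24 - t^3/720 \<le> cos x" and "cos x \<le> 1 - t/2 + t\<^sup>2/24"
proof -
  have t: "0 \<le> t"
    by (simp add: t_def)
  have "t^5 \<le> t^4" "t^4 \<le> t^3" "t^3 \<le> t\<^sup>2"
    using t assms(3) by (simp_all add: power_decreasing)
  moreover have "0 \<le> t^4" "0 \<le> t^3"
    using t by simp_all
  moreover have "\<bar>sin x / x - (1 - t/6 + t\<^sup>2/120 - t^3/5040)\<bar> \<le> t^4/362880"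
    using sinc_Maclaurin_bound[of x] assms(2) by (simp add: t_def)
  moreover have "\<bar>cos x - (1 - t/2 + t\<^sup>2/24 - t^3/720 + t^4/40320)\<bar> \<le> t^5/3628800"
    using cos_Maclaurin_bound[of x] by (simp add: t_def)
  ultimately show "1 - t/6 \<le> sin x / x" and "sin x / x \<le> 1 - t/6 + t\<^sup>2/120"
    and "1 - t/2 + t\<^sup>2/24 - t^3/720 \<le> cos x" and "cos x \<le> 1 - t/2 + t\<^sup>2/24"
    unfolding abs_le_iff by linarith+
qed

lemma neg_ln_ge_of_upper_bound:
  fixes t y :: real
  assumes "0 \<le> t" and "t \<le> 1/10" and "0 < y" and "y \<le> 1 - t/6 + t\<^sup>2/120"
  shows "t/6 \<le> - ln y"
proof -
  have "t^3 \<le> t\<^sup>2"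
    using assms(1,2) by (simp add: power_decreasing)
  then have "t^3/1296 \<le> t\<^sup>2/180"
    using zero_le_power2[of t] by linarith
  then have "1 - t/6 + t\<^sup>2/120 \<le> 1 + (- (t/6)) + (- (t/6))\<^sup>2/2 + (- (t/6))^3/6"
    by (simp add: power3_eq_cube power2_eq_square field_simps)
  also have "\<dots> \<le> exp (- (t/6))"
    by (rule exp_ge_cubic_Taylor)
  finally have "ln y \<le> - (t/6)"
    using assms(3,4) ln_le_cancel_iff[of y "exp (- (t/6))"] by simp
  then show ?thesis
    by simp
qed

lemma ln_ratio_bounds:
  fixes t y z :: real
  assumes "0 \<le> t" and "t \<le> 1/10" and "0 < y" and "0 < z"
    and "1 - t/6 \<le> y" and "y \<le> 1 - t/6 + t\<^sup>2/120"
    and "1 - t/2 + t\<^sup>2/24 - t^3/720 \<le> z" and "z \<le> 1 - t/2 + t\<^sup>2/24"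
  shows "t/3 \<le> ln (y / z)" and "ln (y / z) \<le> t"
proof -
  have "1 - t/2 + t\<^sup>2/24 \<le> (1 - t/6) * (1 - t/3)"
    by (simp add: algebra_simps power2_eq_square)
  also have "\<dots> \<le> y * (1 - t/3)"
    using assms by (intro mult_right_mono) auto
  finally have "t/3 \<le> 1 - z / y"
    using assms(3,8) by (simp add: field_simps)
  also have "1 - z / y \<le> ln (y / z)"
    using ln_le_minus_one[of "z / y"] assms(3,4) by (simp add: ln_div)
  finally show "t/3 \<le> ln (y / z)" .
  have t3: "t^3 \<le> t\<^sup>2"
    using assms(1,2) by (simp add: power_decreasing)
  have t2: "t\<^sup>2 \<le> t"
    using assms(1,2) by (simp add: power2_eq_square mult_left_le)
  have "1 - t/2 \<le> z" and "y \<le> 1"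
    using t2 t3 assms by linarith+
  have "1 \<le> (1 - t/2) * (1 + t)"
    using t2 by (simp add: algebra_simps power2_eq_square)
  also have "\<dots> \<le> z * (1 + t)"
    using \<open>1 - t/2 \<le> z\<close> assms(1) by (intro mult_right_mono) auto
  finally have "y / z \<le> 1 + t"
    using \<open>y \<le> 1\<close> assms(4) by (simp add: divide_le_eq mult.commute)
  then show "ln (y / z) \<le> t"
    using ln_le_minus_one[of "y / z"] assms(3,4) by simp
qed

lemma sinc_poly_cube_le_cos_poly:
  fixes t :: real
  assumes "0 \<le> t" and "t \<le> 1/10"
  shows "(1 - t/6 + t\<^sup>2/120)^3 \<le> (1 - t/2 + t\<^sup>2/24 - t^3/720) * (1 + t\<^sup>2/15 + t^3)"
proof -
  have "0 < ipoly [1690400, -860760, 71900, -2401] t"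
    using assms by (intro ipoly_pos_by_partition[of _ 10 0 "[1]"]) (simp_all add: horner_lower_step_def)
  then have "0 \<le> t^3 * ipoly [1690400, -860760, 71900, -2401] t"
    using assms(1) by simp
  also have "t^3 * ipoly [1690400, -860760, 71900, -2401] t
      = 1728000 * ((1 - t/2 + t\<^sup>2/24 - t^3/720) * (1 + t\<^sup>2/15 + t^3) - (1 - t/6 + t\<^sup>2/120)^3)"
    by (simp add: field_simps eval_nat_numeral)
  finally show ?thesis
    by simp
qed

lemma ln_cube_ratio_le:
  fixes t y z :: real
  assumes "0 \<le> t" and "t \<le> 1/10" and "0 < y" and "0 < z"
    and "y \<le> 1 - t/6 + t\<^sup>2/120" and "1 - t/2 + t\<^sup>2/24 - t^3/720 \<le> z"
  shows "ln (y^3 / z) \<le> t\<^sup>2/15 + t^3"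
proof -
  have "y^3 \<le> (1 - t/6 + t\<^sup>2/120)^3"
    using assms(3,5) by (intro power_mono) auto
  also have "\<dots> \<le> (1 - t/2 + t\<^sup>2/24 - t^3/720) * (1 + t\<^sup>2/15 + t^3)"
    using assms(1,2) by (rule sinc_poly_cube_le_cos_poly)
  also have "\<dots> \<le> z * (1 + t\<^sup>2/15 + t^3)"
    using assms(1,6) by (intro mult_right_mono) auto
  finally have "y^3 / z - 1 \<le> t\<^sup>2/15 + t^3"
    using assms(4) by (simp add: field_simps)
  moreover have "ln (y^3 / z) \<le> y^3 / z - 1"
    using assms(3,4) by (intro ln_le_minus_one) simp
  ultimately show ?thesis
    by linarith
qed

lemma second_order_gain_nonneg:
  fixes k q t a b :: real
  assumes "0 < k" and "0 < q" and "0 \<le> t"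
    and "t/6 \<le> a" and "t/3 \<le> b" and "b \<le> t" and "- (t\<^sup>2/15) - t^3 \<le> 2 * a - b"
    and "t * (1 + q\<^sup>2/6) \<le> (k + 2) * q / 36 - 1/15"
  shows "0 \<le> 2 * a - b + k * q * a\<^sup>2 + q * b\<^sup>2 / 2 - q\<^sup>2 * b^3 / 6"
proof -
  have "k * q * (t/6)\<^sup>2 \<le> k * q * a\<^sup>2"
    using assms by (intro mult_left_mono power_mono) auto
  moreover have "q * (t/3)\<^sup>2 / 2 \<le> q * b\<^sup>2 / 2"
    using assms by (intro divide_right_mono mult_left_mono power_mono) auto
  moreover have "q\<^sup>2 * b^3 / 6 \<le> q\<^sup>2 * t^3 / 6"
    using assms by (intro divide_right_mono mult_left_mono power_mono) auto
  moreover have "t\<^sup>2 * (t * (1 + q\<^sup>2/6)) \<le> t\<^sup>2 * ((k + 2) * q / 36 - 1/15)"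
    using assms(3,8) by (intro mult_left_mono) auto
  ultimately show ?thesis
    using assms(7) by (simp add: power2_eq_square power3_eq_cube algebra_simps power_divide)
qed

lemma weighted_exp_ge_one:
  fixes k q t a b :: real
  assumes "0 < k" and "0 < q" and "0 \<le> t"
    and "t/6 \<le> a" and "t/3 \<le> b" and "b \<le> t" and "- (t\<^sup>2/15) - t^3 \<le> 2 * a - b"
    and "t * (1 + q\<^sup>2/6) \<le> (k + 2) * q / 36 - 1/15"
  shows "1 \<le> 2 / (k + 2) * exp (k * q * a) + k / (k + 2) * exp (- (q * b))"
proof -
  define G where "G = 2 * a - b + k * q * a\<^sup>2 + q * b\<^sup>2 / 2 - q\<^sup>2 * b^3 / 6"
  define A where "A = 1 + k * q * a + (k * q * a)\<^sup>2 / 2"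
  define B where "B = 1 + (- (q * b)) + (- (q * b))\<^sup>2 / 2 + (- (q * b))^3 / 6"
  have "0 \<le> G"
    unfolding G_def using assms by (rule second_order_gain_nonneg)
  have "2 / (k + 2) * A + k / (k + 2) * B = (2 * A + k * B) / (k + 2)"
    by (simp add: add_divide_distrib)
  also have "2 * A + k * B = (k + 2) + k * q * G"
    by (simp add: A_def B_def G_def field_simps power2_eq_square power3_eq_cube)
  also have "((k + 2) + k * q * G) / (k + 2) = 1 + k * q * G / (k + 2)"
    using assms(1) by (simp add: add_divide_distrib)
  finally have "2 / (k + 2) * A + k / (k + 2) * B = 1 + k * q * G / (k + 2)" .
  moreover have "0 \<le> k * q * G / (k + 2)"
    using \<open>0 \<le> G\<close> assms(1,2) by simp
  moreover have "2 / (k + 2) * A + k / (k + 2) * B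
      \<le> 2 / (k + 2) * exp (k * q * a) + k / (k + 2) * exp (- (q * b))"
    unfolding A_def B_def
    using assms exp_ge_cubic_Taylor[of "- (q * b)"] exp_lower_Taylor_quadratic[of "k * q * a"]
    by (intro add_mono mult_left_mono) auto
  ultimately show ?thesis
    by linarith
qed

lemma ineq_fails_below_critical_exponent:
  fixes k p :: real
  assumes "0 < k" and "p < - 12 / (5 * (k + 2))"
  shows "\<exists>x. 0 < x \<and> x < pi / 2 \<and>
           1 \<le> 2 / (k + 2) * (sin x / x) powr (k * p) + k / (k + 2) * (tan x / x) powr p"
proof -
  define q where "q = - p"
  txt \<open>\<open>t\<close> is small enough for the \<open>t\<^sup>2\<close> gain \<open>\<delta>\<close> to dominate the \<open>t\<^sup>3\<close> error terms.\<close>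
  define \<delta> where "\<delta> = (k + 2) * q / 36 - 1/15"
  define t where "t = min (1/10) (\<delta> / (1 + q\<^sup>2/6))"
  define x where "x = sqrt t"
  define y where "y = sin x / x"
  define z where "z = cos x"
  have "- 12 / (5 * (k + 2)) < 0"
    using assms(1) by (intro divide_neg_pos) auto
  then have q: "0 < q"
    using assms(2) unfolding q_def by linarith
  have "12 < q * (5 * (k + 2))"
    using assms by (simp add: q_def field_simps)
  then have "0 < \<delta>"
    by (simp add: \<delta>_def field_simps)
  moreover have c: "0 < 1 + q\<^sup>2/6"
    by (simp add: add_pos_nonneg)
  ultimately have t_pos: "0 < t"
    by (simp add: t_def)
  have t_small: "t \<le> 1/10" and "t \<le> \<delta> / (1 + q\<^sup>2/6)"
    unfolding t_def by (rule min.cobounded1, rule min.cobounded2)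
  have t_gain: "t * (1 + q\<^sup>2/6) \<le> \<delta>"
    using \<open>t \<le> \<delta> / (1 + q\<^sup>2/6)\<close> c by (simp add: le_divide_eq)
  have x: "0 < x" "x\<^sup>2 = t"
    using t_pos t_small by (simp_all add: x_def)
  have "x \<le> 1"
    using t_pos t_small by (simp add: x_def)
  then have "x < pi / 2"
    using pi_gt3 by linarith
  have y: "0 < y" and z: "0 < z"
    using x \<open>x < pi / 2\<close> by (simp_all add: y_def z_def sin_gt_zero cos_gt_zero)
  have tan_div: "tan x / x = y / z"
    by (simp add: y_def z_def tan_def)
  note bounds = sinc_cos_bounds_small[OF x(1), unfolded x(2) y_def [symmetric] z_def [symmetric]]
  have "1 \<le> 2 / (k + 2) * exp (k * q * - ln y) + k / (k + 2) * exp (- (q * ln (y / z)))"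
  proof (rule weighted_exp_ge_one[OF assms(1) q less_imp_le[OF t_pos] _ _ _ _ t_gain[unfolded \<delta>_def]])
    show "t/6 \<le> - ln y"
      using t_pos t_small y bounds by (intro neg_ln_ge_of_upper_bound) auto
    show "t/3 \<le> ln (y / z)" and "ln (y / z) \<le> t"
      using t_pos t_small y z bounds by (intro ln_ratio_bounds; simp)+
    have "ln (y^3 / z) \<le> t\<^sup>2/15 + t^3"
      using t_pos t_small y z bounds by (intro ln_cube_ratio_le) auto
    then show "- (t\<^sup>2/15) - t^3 \<le> 2 * - ln y - ln (y / z)"
      using y z by (simp add: ln_div ln_realpow)
  qed
  also have "exp (k * q * - ln y) = (sin x / x) powr (k * p)"
    unfolding y_def [symmetric] using y by (simp add: powr_def q_def)
  also have "exp (- (q * ln (y / z))) = (tan x / x) powr p"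
    unfolding tan_div using y z by (simp add: powr_def q_def)
  finally show ?thesis
    using x(1) \<open>x < pi / 2\<close> by blast
qed

theorem theorem3p2:
  fixes k p :: real
  assumes "k \<ge> 1" and "p \<noteq> 0"
  shows "(\<forall>x::real. 0 < x \<and> x < pi / 2 \<longrightarrow>
            2 / (k + 2) * (sin x / x) powr (k * p) + k / (k + 2) * (tan x / x) powr p < 1)
         \<longleftrightarrow> (- 12 / (5 * (k + 2)) \<le> p \<and> p < 0)"
proof
  assume holds: "\<forall>x::real. 0 < x \<and> x < pi / 2 \<longrightarrow>
            2 / (k + 2) * (sin x / x) powr (k * p) + k / (k + 2) * (tan x / x) powr p < 1"
  show "- 12 / (5 * (k + 2)) \<le> p \<and> p < 0"
  proof (rule ccontr)
    assume "\<not> (- 12 / (5 * (k + 2)) \<le> p \<and> p < 0)"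
    then have "0 < p \<or> p < - 12 / (5 * (k + 2))"
      using assms(2) by linarith
    moreover have "0 < k"
      using assms(1) by simp
    ultimately obtain x where "0 < x" "x < pi / 2"
      and "1 \<le> 2 / (k + 2) * (sin x / x) powr (k * p) + k / (k + 2) * (tan x / x) powr p"
      using ineq_fails_for_positive_exponent ineq_fails_below_critical_exponent by blast
    with holds show False
      by force
  qed
next
  assume "- 12 / (5 * (k + 2)) \<le> p \<and> p < 0"
  then show "\<forall>x::real. 0 < x \<and> x < pi / 2 \<longrightarrow>
            2 / (k + 2) * (sin x / x) powr (k * p) + k / (k + 2) * (tan x / x) powr p < 1"
    using ineq_holds_above_critical_exponent[OF assms(1)] by blast
qed

end
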